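(* The set $\mathbf{Sch}$ of all Schröder partitions, ordered by $\lambda\le\mu$ iff $\lambda_i\le\mu_i$ for all $i$, is a distributive lattice.
   Context: A Schröder partition is an integer partition in which every odd part has multiplicity at most $1$. In the order, parts beyond the length of a partition are taken to be $0$ (equivalently, $\lambda=(\lambda_1,\dots,\lambda_h)\le\mu=(\mu_1,\dots,\mu_k)$ iff $h\le k$ and $\lambda_i\le\mu_i$ for $i\le h$); this is containment of the corresponding shapes drawn with common top-left corner. *)

theory Defs
  imports "HOL-Algebra.Lattice"
begin

definition is_partition :: "nat list \<Rightarrow> bool" where
  "is_partition xs \<longleftrightarrow> sorted_wrt (\<ge>) xs \<and> (\<forall>x\<in>set xs. 0 < x)"

definition schroeder_partition :: "nat list \<Rightarrow> bool" where
  "schroeder_partition xs \<longleftrightarrow> is_partition xs \<and> (\<forall>x\<in>set xs. odd x \<longrightarrow> count_list xs x \<le> 1)"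

definition Sch :: "nat list set" where
  "Sch = {xs. schroeder_partition xs}"

definition part_le :: "nat list \<Rightarrow> nat list \<Rightarrow> bool" where
  "part_le l m \<longleftrightarrow> length l \<le> length m \<and> (\<forall>i < length l. l ! i \<le> m ! i)"

definition Sch_poset :: "nat list gorder" where
  "Sch_poset = \<lparr>carrier = Sch, eq = (=), le = part_le\<rparr>"

definition distributive_lattice :: "('a, 'b) gorder_scheme \<Rightarrow> bool" where
  "distributive_lattice L \<longleftrightarrow> lattice L \<and>
     (\<forall>x\<in>carrier L. \<forall>y\<in>carrier L. \<forall>z\<in>carrier L.
        x \<sqinter>\<^bsub>L\<^esub> (y \<squnion>\<^bsub>L\<^esub> z) = (x \<sqinter>\<^bsub>L\<^esub> y) \<squnion>\<^bsub>L\<^esub> (x \<sqinter>\<^bsub>L\<^esub> z))"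

end

theory Submission
  imports Defs
begin

text \<open>Read a partition as the sequence of its parts padded by zeros. The containment order is
  then the pointwise order, so join and meet are the pointwise maximum and minimum, and these
  distribute over each other. A weakly decreasing sequence comes from a Schroeder partition exactly
  when each odd value is a strict descent, and this survives pointwise maxima and minima: if the
  maximum (minimum) at i is an odd value c of one sequence, that sequence drops below c at i + 1,
  while the other one is weakly below (above) c at i + 1 and could only equal c there if it took
  the odd value c at i as well, in which case it drops too.\<close>

definition part :: "nat list \<Rightarrow> nat \<Rightarrow> nat" where
  "part l i = (if i < length l then l ! i else 0)"

definition part_sup :: "nat list \<Rightarrow> nat list \<Rightarrow> nat list" where
  "part_sup l m = map (\<lambda>i. max (part l i) (part m i)) [0..<max (length l) (length m)]"

definition part_inf :: "nat list \<Rightarrow> nat list \<Rightarrow> nat list" where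
  "part_inf l m = map (\<lambda>i. min (part l i) (part m i)) [0..<min (length l) (length m)]"

lemma part_map_upt: "part (map f [0..<n]) i = (if i < n then f i else 0)"
  by (simp add: part_def)

lemma part_part_sup [simp]: "part (part_sup l m) = (\<lambda>i. max (part l i) (part m i))"
  by (auto simp: part_sup_def part_map_upt fun_eq_iff) (auto simp: part_def)

lemma part_part_inf [simp]: "part (part_inf l m) = (\<lambda>i. min (part l i) (part m i))"
  by (auto simp: part_inf_def part_map_upt fun_eq_iff) (auto simp: part_def)

lemma length_part_sup [simp]: "length (part_sup l m) = max (length l) (length m)"
  by (simp add: part_sup_def)

lemma length_part_inf [simp]: "length (part_inf l m) = min (length l) (length m)"
  by (simp add: part_inf_def)

lemma part_eqI:
  assumes "length l = length m" "part l = part m"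
  shows "l = m"
proof (rule nth_equalityI)
  show "l ! i = m ! i" if "i < length l" for i
    using fun_cong[OF assms(2), of i] assms(1) that by (simp add: part_def)
qed (fact assms(1))

lemma part_inf_part_sup_distrib:
  "part_inf l (part_sup m n) = part_sup (part_inf l m) (part_inf l n)"
  by (rule part_eqI) (simp_all add: min_max_distrib2)

lemma part_le_refl: "part_le l l"
  by (simp add: part_le_def)

lemma part_le_trans: "part_le l m \<Longrightarrow> part_le m n \<Longrightarrow> part_le l n"
  unfolding part_le_def by (meson le_trans less_le_trans)

lemma part_le_antisym:
  assumes "part_le l m" "part_le m l"
  shows "l = m"
proof (rule nth_equalityI)
  show "length l = length m"
    using assms by (simp add: part_le_def)
  show "l ! i = m ! i" if "i < length l" for i
  proof -
    have "l ! i \<le> m ! i" "m ! i \<le> l ! i"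
      using assms that by (auto simp: part_le_def)
    then show ?thesis
      by simp
  qed
qed

lemma positive_iff_part: "(\<forall>x\<in>set l. 0 < x) \<longleftrightarrow> (\<forall>i. 0 < part l i \<longleftrightarrow> i < length l)"
  by (auto simp: part_def in_set_conv_nth)

lemma part_le_iff_le_part:
  assumes "\<forall>x\<in>set l. 0 < x"
  shows "part_le l m \<longleftrightarrow> (\<forall>i. part l i \<le> part m i)"
proof
  assume "part_le l m"
  then show "\<forall>i. part l i \<le> part m i"
    by (auto simp: part_le_def part_def)
next
  assume le: "\<forall>i. part l i \<le> part m i"
  have pos: "0 < part l i \<longleftrightarrow> i < length l" for i
    using assms positive_iff_part by blast
  have "length l \<le> length m"
    using le[rule_format, of "length m"] pos[of "length m"] by (auto simp: part_def)
  moreover have "l ! i \<le> m ! i" if "i < length l" for i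
    using le[rule_format, of i] that \<open>length l \<le> length m\<close> by (simp add: part_def)
  ultimately show "part_le l m"
    by (simp add: part_le_def)
qed

lemma max_strict_descent:
  fixes a b a' b' :: "'a::linorder"
  assumes "a' \<le> a" "b' \<le> b" "P a \<Longrightarrow> a' < a" "P b \<Longrightarrow> b' < b" "P (max a b)"
  shows "max a' b' < max a b"
  using assms by (cases "a \<le> b"; cases "a = b") (auto simp: max_def)

lemma min_strict_descent:
  fixes a b a' b' :: "'a::linorder"
  assumes "a' \<le> a" "b' \<le> b" "P a \<Longrightarrow> a' < a" "P b \<Longrightarrow> b' < b" "P (min a b)"
  shows "min a' b' < min a b"
  using assms by (cases "a \<le> b") (auto simp: min_def)

definition schroeder_seq :: "(nat \<Rightarrow> nat) \<Rightarrow> bool" where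
  "schroeder_seq f \<longleftrightarrow> antimono f \<and> (\<forall>i. odd (f i) \<longrightarrow> f (Suc i) < f i)"

lemma schroeder_seq_max:
  assumes f: "schroeder_seq f" and g: "schroeder_seq g"
  shows "schroeder_seq (\<lambda>i. max (f i) (g i))"
proof -
  have "antimono (\<lambda>i. max (f i) (g i))"
    using f g unfolding schroeder_seq_def by (intro antimonoI max.mono) (auto dest: antimonoD)
  moreover have "max (f (Suc i)) (g (Suc i)) < max (f i) (g i)" if "odd (max (f i) (g i))" for i
    using f g that
    by (intro max_strict_descent[where P = odd]) (auto simp: schroeder_seq_def antimono_def)
  ultimately show ?thesis
    by (simp add: schroeder_seq_def)
qed

lemma schroeder_seq_min:
  assumes f: "schroeder_seq f" and g: "schroeder_seq g"
  shows "schroeder_seq (\<lambda>i. min (f i) (g i))"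
proof -
  have "antimono (\<lambda>i. min (f i) (g i))"
    using f g unfolding schroeder_seq_def by (intro antimonoI min.mono) (auto dest: antimonoD)
  moreover have "min (f (Suc i)) (g (Suc i)) < min (f i) (g i)" if "odd (min (f i) (g i))" for i
    using f g that
    by (intro min_strict_descent[where P = odd]) (auto simp: schroeder_seq_def antimono_def)
  ultimately show ?thesis
    by (simp add: schroeder_seq_def)
qed

lemma sorted_wrt_ge_iff_antimono_part: "sorted_wrt (\<ge>) l \<longleftrightarrow> antimono (part l)"
proof
  assume sorted: "sorted_wrt (\<ge>) l"
  show "antimono (part l)"
  proof (rule antimonoI)
    fix i j :: nat assume "i \<le> j"
    with sorted show "part l j \<le> part l i"
      by (cases "i = j") (auto simp: part_def sorted_wrt_iff_nth_less)
  qed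
next
  assume anti: "antimono (part l)"
  show "sorted_wrt (\<ge>) l"
    unfolding sorted_wrt_iff_nth_less
  proof (intro allI impI)
    fix i j assume "i < j" "j < length l"
    then show "l ! j \<le> l ! i"
      using antimonoD[OF anti, of i j] by (simp add: part_def)
  qed
qed

lemma count_list_le_Suc_0_iff:
  "count_list xs x \<le> 1 \<longleftrightarrow> (\<forall>i<length xs. \<forall>j<length xs. xs ! i = x \<longrightarrow> xs ! j = x \<longrightarrow> i = j)"
proof -
  have "count_list xs x = card {i. i < length xs \<and> xs ! i = x}"
    by (simp add: count_list_eq_length_filter length_filter_conv_card eq_commute)
  then show ?thesis
    by (auto simp: card_le_Suc0_iff_eq)
qed

text \<open>In a weakly decreasing list, repeated values are adjacent; odd values are never 0, so
  the last part needs no special treatment.\<close>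
lemma odd_parts_distinct_iff_strict_descent:
  assumes "antimono (part l)"
  shows "(\<forall>x\<in>set l. odd x \<longrightarrow> count_list l x \<le> 1) \<longleftrightarrow>
         (\<forall>i. odd (part l i) \<longrightarrow> part l (Suc i) < part l i)"
proof
  assume distinct: "\<forall>x\<in>set l. odd x \<longrightarrow> count_list l x \<le> 1"
  show "\<forall>i. odd (part l i) \<longrightarrow> part l (Suc i) < part l i"
  proof (intro allI impI)
    fix i assume odd: "odd (part l i)"
    then have i: "i < length l"
      by (auto simp: part_def split: if_splits)
    have "part l (Suc i) \<noteq> part l i"
    proof
      assume eq: "part l (Suc i) = part l i"
      with odd have "Suc i < length l"
        by (auto simp: part_def split: if_splits)
      moreover have "count_list l (l ! i) \<le> 1"
        using distinct i odd by (simp add: part_def)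
      ultimately show False
        using eq i unfolding count_list_le_Suc_0_iff part_def by (metis lessI less_irrefl)
    qed
    moreover have "part l (Suc i) \<le> part l i"
      using assms by (simp add: antimono_def)
    ultimately show "part l (Suc i) < part l i"
      by simp
  qed
next
  assume descent: "\<forall>i. odd (part l i) \<longrightarrow> part l (Suc i) < part l i"
  have no_repeat: False if "i < j" "j < length l" "l ! i = x" "l ! j = x" "odd x" for i j x
  proof -
    have "part l i = x" "part l j = x"
      using that by (simp_all add: part_def)
    moreover have "part l j \<le> part l (Suc i)"
      using assms \<open>i < j\<close> by (simp add: antimono_def)
    ultimately show False
      using descent \<open>odd x\<close> by (metis not_less)
  qed
  show "\<forall>x\<in>set l. odd x \<longrightarrow> count_list l x \<le> 1"
    unfolding count_list_le_Suc_0_iff using no_repeat by (metis linorder_neqE_nat)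
qed

lemma Sch_iff_schroeder_seq:
  "l \<in> Sch \<longleftrightarrow> (\<forall>i. 0 < part l i \<longleftrightarrow> i < length l) \<and> schroeder_seq (part l)"
  unfolding Sch_def schroeder_partition_def is_partition_def schroeder_seq_def
    positive_iff_part sorted_wrt_ge_iff_antimono_part
  using odd_parts_distinct_iff_strict_descent by auto

lemma part_sup_in_Sch: "l \<in> Sch \<Longrightarrow> m \<in> Sch \<Longrightarrow> part_sup l m \<in> Sch"
  by (auto simp: Sch_iff_schroeder_seq schroeder_seq_max less_max_iff_disj)

lemma part_inf_in_Sch: "l \<in> Sch \<Longrightarrow> m \<in> Sch \<Longrightarrow> part_inf l m \<in> Sch"
  by (auto simp: Sch_iff_schroeder_seq schroeder_seq_min)

lemma (in partial_order) join_eq_least: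
  assumes "least L s (Upper L {x, y})"
  shows "x \<squnion> y = s"
  unfolding join_def sup_def by (rule some_equality) (fact assms, erule least_unique[OF _ assms])

lemma (in partial_order) meet_eq_greatest:
  assumes "greatest L s (Lower L {x, y})"
  shows "x \<sqinter> y = s"
  unfolding meet_def inf_def by (rule some_equality) (fact assms, erule greatest_unique[OF _ assms])

lemma carrier_Sch_poset [simp]: "carrier Sch_poset = Sch"
  by (simp add: Sch_poset_def)

lemma le_Sch_poset_iff:
  "l \<in> Sch \<Longrightarrow> l \<sqsubseteq>\<^bsub>Sch_poset\<^esub> m \<longleftrightarrow> (\<forall>i. part l i \<le> part m i)"
  by (simp add: Sch_poset_def part_le_iff_le_part Sch_def schroeder_partition_def is_partition_def)

lemma partial_order_Sch_poset: "partial_order Sch_poset"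
  by unfold_locales (auto simp: Sch_poset_def part_le_refl part_le_antisym elim: part_le_trans)

lemma least_part_sup:
  assumes "l \<in> Sch" "m \<in> Sch"
  shows "least Sch_poset (part_sup l m) (Upper Sch_poset {l, m})"
  by (rule least_UpperI) (auto simp: assms part_sup_in_Sch le_Sch_poset_iff Upper_def)

lemma greatest_part_inf:
  assumes "l \<in> Sch" "m \<in> Sch"
  shows "greatest Sch_poset (part_inf l m) (Lower Sch_poset {l, m})"
  by (rule greatest_LowerI) (auto simp: assms part_inf_in_Sch le_Sch_poset_iff Lower_def)

lemma lattice_Sch_poset: "lattice Sch_poset"
proof -
  interpret partial_order Sch_poset
    by (rule partial_order_Sch_poset)
  show ?thesis
    by unfold_locales (use least_part_sup greatest_part_inf in fastforce)+
qed

lemma join_Sch_poset: "l \<in> Sch \<Longrightarrow> m \<in> Sch \<Longrightarrow> l \<squnion>\<^bsub>Sch_poset\<^esub> m = part_sup l m"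
  by (rule partial_order.join_eq_least[OF partial_order_Sch_poset least_part_sup])

lemma meet_Sch_poset: "l \<in> Sch \<Longrightarrow> m \<in> Sch \<Longrightarrow> l \<sqinter>\<^bsub>Sch_poset\<^esub> m = part_inf l m"
  by (rule partial_order.meet_eq_greatest[OF partial_order_Sch_poset greatest_part_inf])

theorem mainTheorem5:
  shows "distributive_lattice Sch_poset"
  unfolding distributive_lattice_def
  by (simp add: lattice_Sch_poset join_Sch_poset meet_Sch_poset part_sup_in_Sch part_inf_in_Sch
      part_inf_part_sup_distrib)

end
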